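(* There is an absolute constant $K$ such that the following holds. Let $k,n$ be integers larger than $1$, and let $w$ be the width of $[k]^n$. If $\mathcal{F}\subset[k]^n$ does not contain three distinct elements $\mathbf u,\mathbf v,\mathbf w$ with $\mathbf u=\mathbf v\vee\mathbf w$, then $|\mathcal{F}|\le K w$.
   Context: $[k]^n=\{1,\dots,k\}^n$ with the coordinatewise order; its width is the size of its largest antichain. For $\mathbf v,\mathbf w\in[k]^n$, $\mathbf v\vee\mathbf w=(\max\{\mathbf v(1),\mathbf w(1)\},\dots,\max\{\mathbf v(n),\mathbf w(n)\})$. *)

theory Defs
  imports Complex_Main "HOL-Library.FuncSet"
begin

definition grid :: "nat \<Rightarrow> nat \<Rightarrow> (nat \<Rightarrow> nat) set" where
  "grid k n = PiE {..<n} (\<lambda>_. {1..k})"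

definition cw_le :: "nat \<Rightarrow> (nat \<Rightarrow> nat) \<Rightarrow> (nat \<Rightarrow> nat) \<Rightarrow> bool" where
  "cw_le n v w \<longleftrightarrow> (\<forall>i<n. v i \<le> w i)"

definition grid_antichain :: "nat \<Rightarrow> nat \<Rightarrow> (nat \<Rightarrow> nat) set \<Rightarrow> bool" where
  "grid_antichain k n A \<longleftrightarrow> A \<subseteq> grid k n \<and> (\<forall>v\<in>A. \<forall>w\<in>A. cw_le n v w \<longrightarrow> v = w)"

definition grid_width :: "nat \<Rightarrow> nat \<Rightarrow> nat" where
  "grid_width k n = Max (card ` {A. grid_antichain k n A})"

definition join :: "nat \<Rightarrow> (nat \<Rightarrow> nat) \<Rightarrow> (nat \<Rightarrow> nat) \<Rightarrow> (nat \<Rightarrow> nat)" where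
  "join n v w = (\<lambda>i\<in>{..<n}. max (v i) (w i))"

end

theory Submission
  imports Defs "HOL-Computational_Algebra.Polynomial"
begin

text \<open>Split the \<open>n = a + b\<close> coordinates into the first \<open>a\<close> and the last \<open>b\<close>.  If \<open>u \<in> F\<close> lay
  strictly above some \<open>v \<in> F\<close> agreeing with it on the last \<open>b\<close> coordinates and strictly above
  some \<open>w \<in> F\<close> agreeing with it on the first \<open>a\<close>, then \<open>u = v \<or> w\<close>.  So every element of \<open>F\<close> is
  minimal in one of its two fibres, and the minimal elements of a fibre form an antichain of
  \<open>[k]\<^sup>a\<close> or \<open>[k]\<^sup>b\<close>; hence \<open>|F| \<le> k\<^sup>b w(k, a) + k\<^sup>a w(k, b)\<close>.  With \<open>a, b \<approx> n / 2\<close> this is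
  \<open>O(w(k, n))\<close> because \<open>w(k, m)\<close> is of order \<open>k\<^sup>m\<^sup>-\<^sup>1 / \<surd>m\<close>.  For the upper bound, the width
  is at most twice the middle level (each lower level injects into the next one by the
  bracketing construction), and a level of \<open>[k]\<^sup>m\<close> is a coefficient of \<open>(1 + X + \<dots> + X\<^sup>k\<^sup>-\<^sup>1)\<^sup>m\<close>,
  which is estimated through the central binomial coefficient.  For the lower bound, Chebyshev's
  inequality puts half of \<open>[k]\<^sup>m\<close> into \<open>O(k \<surd>m)\<close> levels, one of which is a large antichain.\<close>

section \<open>Levels and antichains\<close>

definition grid_rank :: "nat \<Rightarrow> (nat \<Rightarrow> nat) \<Rightarrow> nat" where
  "grid_rank m x = (\<Sum>i<m. x i - 1)"

definition grid_level :: "nat \<Rightarrow> nat \<Rightarrow> nat \<Rightarrow> (nat \<Rightarrow> nat) set" where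
  "grid_level k m t = {x \<in> grid k m. grid_rank m x = t}"

lemma finite_grid: "finite (grid k m)"
  by (simp add: grid_def finite_PiE)

lemma card_grid: "card (grid k m) = k ^ m"
  by (simp add: grid_def card_PiE)

lemma mem_grid_iff: "x \<in> grid k m \<longleftrightarrow> (\<forall>i<m. 1 \<le> x i \<and> x i \<le> k) \<and> (\<forall>i\<ge>m. x i = undefined)"
  by (auto simp: grid_def PiE_iff extensional_def)

lemma grid_eqI: "x \<in> grid k m \<Longrightarrow> y \<in> grid k m \<Longrightarrow> (\<And>i. i < m \<Longrightarrow> x i = y i) \<Longrightarrow> x = y"
  unfolding grid_def by (rule PiE_ext) auto

lemma cw_le_refl: "cw_le m x x"
  by (simp add: cw_le_def)

lemma cw_le_trans: "cw_le m x y \<Longrightarrow> cw_le m y z \<Longrightarrow> cw_le m x z"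
  by (auto simp: cw_le_def intro: order_trans)

lemma cw_le_antisym: "x \<in> grid k m \<Longrightarrow> y \<in> grid k m \<Longrightarrow> cw_le m x y \<Longrightarrow> cw_le m y x \<Longrightarrow> x = y"
  by (rule grid_eqI) (auto simp: cw_le_def intro: antisym)

lemma grid_rank_Suc: "grid_rank (Suc m) x = grid_rank m x + (x m - 1)"
  by (simp add: grid_rank_def)

lemma finite_grid_level: "finite (grid_level k m t)"
  by (simp add: grid_level_def finite_grid)

lemma finite_grid_antichains: "finite {A. grid_antichain k m A}"
  by (rule finite_subset[of _ "Pow (grid k m)"]) (auto simp: grid_antichain_def finite_grid)

lemma card_antichain_le_width: "grid_antichain k m A \<Longrightarrow> card A \<le> grid_width k m"
  unfolding grid_width_def using finite_grid_antichains by (auto intro!: Max_ge)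

lemma grid_width_le:
  assumes "\<And>A. grid_antichain k m A \<Longrightarrow> card A \<le> c"
  shows "grid_width k m \<le> c"
proof -
  have "grid_antichain k m {}" by (simp add: grid_antichain_def)
  then show ?thesis
    unfolding grid_width_def using finite_grid_antichains assms by (auto intro!: Max.boundedI)
qed

lemma grid_level_antichain: "grid_antichain k m (grid_level k m t)"
proof -
  have "x = y" if "x \<in> grid_level k m t" "y \<in> grid_level k m t" "cw_le m x y" for x y
  proof -
    have g: "x \<in> grid k m" "y \<in> grid k m" and r: "grid_rank m x = grid_rank m y"
      using that by (auto simp: grid_level_def)
    have le: "\<forall>i<m. x i - 1 \<le> y i - 1" using that(3) by (auto simp: cw_le_def)
    have eq: "x i - 1 = y i - 1" if "i < m" for i
    proof (rule ccontr)
      assume "x i - 1 \<noteq> y i - 1"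
      then have "(\<Sum>i<m. x i - 1) < (\<Sum>i<m. y i - 1)"
        using le \<open>i < m\<close> by (intro sum_strict_mono_ex1) (auto simp: order.strict_iff_order)
      then show False using r by (simp add: grid_rank_def)
    qed
    show ?thesis
    proof (rule grid_eqI[OF g])
      fix i assume "i < m"
      then have "1 \<le> x i" "1 \<le> y i" using g by (auto simp: mem_grid_iff)
      with eq[OF \<open>i < m\<close>] show "x i = y i" by arith
    qed
  qed
  then show ?thesis by (auto simp: grid_antichain_def grid_level_def)
qed

section \<open>The width is at most twice the middle level\<close>

text \<open>Read coordinate \<open>x i\<close> as a word of \<open>x i - 1\<close> closing brackets followed by \<open>k - x i\<close> opening
  brackets, and concatenate the words of the coordinates \<open>0, \<dots>, m - 1\<close>.  \<open>unmatched k m x\<close>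
  counts the opening brackets left unmatched and \<open>first_unmatched k m x\<close> is the coordinate
  holding the leftmost of them.  Raising that coordinate turns this bracket into a closing one
  without changing the matched pairs, so it can be undone: this is the bracketing construction
  of the symmetric chain decomposition of \<open>[k]\<^sup>m\<close>.\<close>

fun unmatched :: "nat \<Rightarrow> nat \<Rightarrow> (nat \<Rightarrow> nat) \<Rightarrow> nat" where
  "unmatched k 0 x = 0"
| "unmatched k (Suc m) x =
     (if x m - 1 < unmatched k m x then unmatched k m x - (x m - 1) else 0) + (k - x m)"

fun first_unmatched :: "nat \<Rightarrow> nat \<Rightarrow> (nat \<Rightarrow> nat) \<Rightarrow> nat" where
  "first_unmatched k 0 x = 0"
| "first_unmatched k (Suc m) x = (if x m - 1 < unmatched k m x then first_unmatched k m x else m)"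

definition raise :: "nat \<Rightarrow> nat \<Rightarrow> (nat \<Rightarrow> nat) \<Rightarrow> (nat \<Rightarrow> nat)" where
  "raise k m x = x(first_unmatched k m x := x (first_unmatched k m x) + 1)"

lemma unmatched_cong:
  "(\<And>i. i < m \<Longrightarrow> x i = y i) \<Longrightarrow> unmatched k m x = unmatched k m y \<and> first_unmatched k m x = first_unmatched k m y"
  by (induction m) auto

lemma unmatched_rank_bound:
  "\<forall>i<m. 1 \<le> x i \<and> x i \<le> k \<Longrightarrow> m * (k - 1) \<le> unmatched k m x + 2 * grid_rank m x"
  by (induction m) (auto simp: grid_rank_Suc less_Suc_eq)

lemma first_unmatched_bounds:
  "\<forall>i<m. 1 \<le> x i \<and> x i \<le> k \<Longrightarrow> 0 < unmatched k m x \<Longrightarrow> first_unmatched k m x < m \<and> x (first_unmatched k m x) < k"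
  by (induction m) (auto simp: less_Suc_eq split: if_splits)

lemma raise_Suc:
  "raise k (Suc m) x = (if x m - 1 < unmatched k m x then raise k m x else x(m := x m + 1))"
  by (simp add: raise_def)

lemma raise_beyond:
  "\<forall>i<m. 1 \<le> x i \<and> x i \<le> k \<Longrightarrow> 0 < unmatched k m x \<Longrightarrow> raise k m x m = x m"
  using first_unmatched_bounds[of m x k] by (simp add: raise_def)

lemma unmatched_raise:
  "\<forall>i<m. 1 \<le> x i \<and> x i \<le> k \<Longrightarrow> 0 < unmatched k m x \<Longrightarrow> unmatched k m (raise k m x) = unmatched k m x - 1"
proof (induction m)
  case 0
  then show ?case by simp
next
  case (Suc m)
  then have x: "\<forall>i<m. 1 \<le> x i \<and> x i \<le> k" "1 \<le> x m" "x m \<le> k"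
    by (auto simp: less_Suc_eq)
  show ?case
  proof (cases "x m - 1 < unmatched k m x")
    case True
    then have "raise k m x m = x m" "unmatched k m (raise k m x) = unmatched k m x - 1"
      using raise_beyond[OF x(1)] Suc.IH[OF x(1)] by simp_all
    then show ?thesis using True x by (simp add: raise_Suc) arith
  next
    case False
    have "unmatched k m (\<lambda>i. if i = m then Suc (x m) else x i) = unmatched k m x"
      using unmatched_cong[of m "\<lambda>i. if i = m then Suc (x m) else x i" x] by simp
    then show ?thesis using False Suc.prems by (simp add: raise_Suc)
  qed
qed

text \<open>If raising gives the same result on the first \<open>m + 1\<close> coordinates, then \<open>x\<close> and \<open>y\<close>
  took the same branch at coordinate \<open>m\<close>: otherwise \<open>y\<close> would agree with \<open>raise k m x\<close> below \<open>m\<close>,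
  so it would have one unmatched bracket fewer than \<open>x\<close> there, while \<open>x m = y m + 1\<close>.\<close>

lemma raise_Suc_same_branch:
  assumes x: "\<forall>i<m. 1 \<le> x i \<and> x i \<le> k" "1 \<le> x m" and y: "\<forall>i<m. 1 \<le> y i \<and> y i \<le> k" "1 \<le> y m"
    and eq: "\<forall>i<Suc m. raise k (Suc m) x i = raise k (Suc m) y i"
  shows "x m - 1 < unmatched k m x \<longleftrightarrow> y m - 1 < unmatched k m y"
proof -
  have False if ux: "x m - 1 < unmatched k m x" and uy: "\<not> y m - 1 < unmatched k m y"
    and x: "\<forall>i<m. 1 \<le> x i \<and> x i \<le> k" and y: "1 \<le> y m"
    and eq: "\<forall>i<Suc m. raise k (Suc m) x i = raise k (Suc m) y i" for x y
  proof -
    have "\<forall>i<m. raise k m x i = y i" using eq ux uy by (auto simp: raise_Suc)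
    then have "unmatched k m y = unmatched k m (raise k m x)"
      using unmatched_cong[of m y "raise k m x" k] by simp
    also have "\<dots> = unmatched k m x - 1" using unmatched_raise[OF x] ux by simp
    finally have "unmatched k m y = unmatched k m x - 1" .
    moreover have "x m = y m + 1"
      using eq[rule_format, of m] ux uy raise_beyond[OF x] by (simp add: raise_Suc)
    ultimately show False using ux uy y by simp
  qed
  from this[of x y] this[of y x] show ?thesis using x y eq by auto
qed

lemma raise_injective_prefix:
  assumes "\<forall>i<m. 1 \<le> x i \<and> x i \<le> k" "\<forall>i<m. 1 \<le> y i \<and> y i \<le> k"
    and "0 < unmatched k m x" "0 < unmatched k m y"
    and "\<forall>i<m. raise k m x i = raise k m y i"
  shows "\<forall>i<m. x i = y i"
  using assms
proof (induction m)
  case 0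
  then show ?case by simp
next
  case (Suc m)
  have x: "\<forall>i<m. 1 \<le> x i \<and> x i \<le> k" "1 \<le> x m" and y: "\<forall>i<m. 1 \<le> y i \<and> y i \<le> k" "1 \<le> y m"
    using Suc.prems by (auto simp: less_Suc_eq)
  have eq: "\<forall>i<Suc m. raise k (Suc m) x i = raise k (Suc m) y i" by fact
  show ?case
  proof (cases "x m - 1 < unmatched k m x")
    case True
    then have uy: "y m - 1 < unmatched k m y" using raise_Suc_same_branch[OF x y eq] by simp
    then have "\<forall>i<m. x i = y i" using True Suc.IH[OF x(1) y(1)] eq by (simp add: raise_Suc)
    moreover have "x m = y m"
      using eq[rule_format, of m] True uy raise_beyond[OF x(1)] raise_beyond[OF y(1)] by (simp add: raise_Suc)
    ultimately show ?thesis by (auto simp: less_Suc_eq)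
  next
    case False
    then have "\<not> y m - 1 < unmatched k m y" using raise_Suc_same_branch[OF x y eq] by simp
    then show ?thesis using False eq by (auto simp: raise_Suc less_Suc_eq split: if_splits)
  qed
qed

lemma unmatched_pos_below_middle:
  "x \<in> grid k m \<Longrightarrow> 2 * grid_rank m x < m * (k - 1) \<Longrightarrow> 0 < unmatched k m x"
  using unmatched_rank_bound[of m x k] by (fastforce simp: mem_grid_iff)

lemma cw_le_raise: "cw_le m x (raise k m x)"
  unfolding cw_le_def raise_def by simp

lemma raise_in_grid:
  assumes "x \<in> grid k m" "0 < unmatched k m x"
  shows "raise k m x \<in> grid k m" "grid_rank m (raise k m x) = grid_rank m x + 1"
proof -
  have x: "\<forall>i<m. 1 \<le> x i \<and> x i \<le> k" using assms(1) by (simp add: mem_grid_iff)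
  define j where "j = first_unmatched k m x"
  have j: "j < m" "x j < k" using first_unmatched_bounds[OF x assms(2)] by (simp_all add: j_def)
  show "raise k m x \<in> grid k m" using assms(1) j by (auto simp: mem_grid_iff raise_def j_def)
  have "(\<Sum>i<m. raise k m x i - 1) = (\<Sum>i<m. (x i - 1) + (if i = j then 1 else 0))"
    using x j by (intro sum.cong) (auto simp: raise_def j_def)
  also have "\<dots> = (\<Sum>i<m. x i - 1) + 1" using j by (simp add: sum.distrib)
  finally show "grid_rank m (raise k m x) = grid_rank m x + 1" by (simp add: grid_rank_def)
qed

lemma raise_injective:
  assumes "x \<in> grid k m" "y \<in> grid k m" "0 < unmatched k m x" "0 < unmatched k m y"
    and "raise k m x = raise k m y"
  shows "x = y"
proof -
  have "\<forall>i<m. 1 \<le> x i \<and> x i \<le> k" "\<forall>i<m. 1 \<le> y i \<and> y i \<le> k"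
    using assms(1,2) by (simp_all add: mem_grid_iff)
  from raise_injective_prefix[OF this assms(3,4)] assms(5) have "\<forall>i<m. x i = y i" by simp
  then show ?thesis using grid_eqI[OF assms(1,2)] by blast
qed

lemma raise_iter_in_grid:
  assumes "x \<in> grid k m" "grid_rank m x + j \<le> m * (k - 1) div 2"
  shows "(raise k m ^^ j) x \<in> grid k m \<and> grid_rank m ((raise k m ^^ j) x) = grid_rank m x + j
    \<and> cw_le m x ((raise k m ^^ j) x)"
  using assms(2)
proof (induction j)
  case 0
  then show ?case using assms(1) by (simp add: cw_le_def)
next
  case (Suc j)
  then have ih: "(raise k m ^^ j) x \<in> grid k m" "grid_rank m ((raise k m ^^ j) x) = grid_rank m x + j"
    "cw_le m x ((raise k m ^^ j) x)" by auto
  have "0 < unmatched k m ((raise k m ^^ j) x)"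
    using ih Suc.prems by (intro unmatched_pos_below_middle) auto
  moreover have "cw_le m x ((raise k m ^^ Suc j) x)"
    using cw_le_trans[OF ih(3) cw_le_raise] by simp
  ultimately show ?case using raise_in_grid[OF ih(1)] ih(2) by simp
qed

lemma raise_iter_cancel:
  assumes "x \<in> grid k m" "y \<in> grid k m"
    and "grid_rank m x + c + j \<le> m * (k - 1) div 2" "grid_rank m y + j \<le> m * (k - 1) div 2"
    and "(raise k m ^^ (c + j)) x = (raise k m ^^ j) y"
  shows "(raise k m ^^ c) x = y"
  using assms(3-5)
proof (induction j)
  case 0
  then show ?case by simp
next
  case (Suc j)
  have x: "(raise k m ^^ (c + j)) x \<in> grid k m" "grid_rank m ((raise k m ^^ (c + j)) x) = grid_rank m x + (c + j)"
    using raise_iter_in_grid[OF assms(1), of "c + j"] Suc.prems by auto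
  have y: "(raise k m ^^ j) y \<in> grid k m" "grid_rank m ((raise k m ^^ j) y) = grid_rank m y + j"
    using raise_iter_in_grid[OF assms(2), of j] Suc.prems by auto
  have "(raise k m ^^ (c + j)) x = (raise k m ^^ j) y"
  proof (rule raise_injective[OF x(1) y(1)])
    show "0 < unmatched k m ((raise k m ^^ (c + j)) x)" "0 < unmatched k m ((raise k m ^^ j) y)"
      using x y Suc.prems by (auto intro!: unmatched_pos_below_middle)
    show "raise k m ((raise k m ^^ (c + j)) x) = raise k m ((raise k m ^^ j) y)"
      using Suc.prems(3) by simp
  qed
  then show ?case using Suc.IH Suc.prems by simp
qed

lemma card_lower_antichain_le_middle_level:
  assumes A: "grid_antichain k m A" and lower: "\<forall>x\<in>A. 2 * grid_rank m x \<le> m * (k - 1)"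
  shows "card A \<le> card (grid_level k m (m * (k - 1) div 2))"
proof -
  define M where "M = m * (k - 1) div 2"
  define lift where "lift x = (raise k m ^^ (M - grid_rank m x)) x" for x
  have AG: "x \<in> grid k m" if "x \<in> A" for x using A that by (auto simp: grid_antichain_def)
  have rank: "grid_rank m x \<le> M" if "x \<in> A" for x
    using div_le_mono[of "2 * grid_rank m x" "m * (k - 1)" 2] lower that by (simp add: M_def)
  have lift: "lift x \<in> grid_level k m M" if "x \<in> A" for x
    using raise_iter_in_grid[OF AG[OF that], of "M - grid_rank m x"] rank[OF that]
    unfolding lift_def grid_level_def M_def by simp
  have below: "x = y" if xy: "x \<in> A" "y \<in> A" "lift x = lift y" "grid_rank m x \<le> grid_rank m y" for x y
  proof -
    define c where "c = grid_rank m y - grid_rank m x"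
    have ry: "grid_rank m y \<le> M" using rank[OF xy(2)] .
    have "(raise k m ^^ (c + (M - grid_rank m y))) x = (raise k m ^^ (M - grid_rank m y)) y"
      using xy(3,4) ry unfolding lift_def c_def by (simp add: add.commute)
    moreover have "grid_rank m x + c + (M - grid_rank m y) \<le> M" "grid_rank m y + (M - grid_rank m y) \<le> M"
      using xy(4) ry by (simp_all add: c_def)
    ultimately have "(raise k m ^^ c) x = y"
      unfolding M_def by (rule raise_iter_cancel[OF AG[OF xy(1)] AG[OF xy(2)], rotated -1])
    moreover have "cw_le m x ((raise k m ^^ c) x)"
      using raise_iter_in_grid[OF AG[OF xy(1)], of c] xy(4) ry unfolding c_def M_def by simp
    ultimately show ?thesis using A xy(1,2) by (auto simp: grid_antichain_def)
  qed
  have "inj_on lift A"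
  proof (rule inj_onI)
    fix x y assume "x \<in> A" "y \<in> A" "lift x = lift y"
    then show "x = y" using below[of x y] below[of y x] by (cases "grid_rank m x \<le> grid_rank m y") auto
  qed
  then have "card A \<le> card (grid_level k m M)"
    using lift by (intro card_inj_on_le[OF _ _ finite_grid_level]) auto
  then show ?thesis unfolding M_def .
qed

definition grid_flip :: "nat \<Rightarrow> nat \<Rightarrow> (nat \<Rightarrow> nat) \<Rightarrow> (nat \<Rightarrow> nat)" where
  "grid_flip k m x = (\<lambda>i\<in>{..<m}. k + 1 - x i)"

lemma grid_flip_in_grid: "x \<in> grid k m \<Longrightarrow> grid_flip k m x \<in> grid k m"
  by (auto simp: mem_grid_iff grid_flip_def)

lemma grid_rank_flip: "x \<in> grid k m \<Longrightarrow> grid_rank m (grid_flip k m x) + grid_rank m x = m * (k - 1)"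
proof -
  assume x: "x \<in> grid k m"
  have "grid_rank m (grid_flip k m x) + grid_rank m x = (\<Sum>i<m. (k + 1 - x i - 1) + (x i - 1))"
    by (simp add: grid_rank_def grid_flip_def sum.distrib)
  also have "\<dots> = (\<Sum>i<m. k - 1)" using x by (intro sum.cong) (auto simp: mem_grid_iff)
  finally show ?thesis by simp
qed

lemma cw_le_flip_iff:
  assumes "x \<in> grid k m" "y \<in> grid k m"
  shows "cw_le m (grid_flip k m x) (grid_flip k m y) \<longleftrightarrow> cw_le m y x"
proof -
  have "k + 1 - x i \<le> k + 1 - y i \<longleftrightarrow> y i \<le> x i" if "i < m" for i
    using assms that by (auto simp: mem_grid_iff)
  then show ?thesis by (simp add: cw_le_def grid_flip_def)
qed

lemma inj_on_grid_flip: "inj_on (grid_flip k m) (grid k m)"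
proof (rule inj_onI)
  fix x y assume xy: "x \<in> grid k m" "y \<in> grid k m" "grid_flip k m x = grid_flip k m y"
  then show "x = y" using cw_le_flip_iff[OF xy(1,2)] cw_le_flip_iff[OF xy(2,1)]
    by (intro cw_le_antisym[OF xy(1,2)]) (simp_all add: cw_le_refl)
qed

theorem grid_width_le_middle_level: "grid_width k m \<le> 2 * card (grid_level k m (m * (k - 1) div 2))"
proof (rule grid_width_le)
  fix A assume A: "grid_antichain k m A"
  then have AG: "A \<subseteq> grid k m" by (simp add: grid_antichain_def)
  define L where "L = {x\<in>A. 2 * grid_rank m x \<le> m * (k - 1)}"
  define U where "U = A - L"
  have "A = L \<union> U" by (auto simp: L_def U_def)
  then have "card A \<le> card L + card U" by (metis card_Un_le)
  moreover have "card L \<le> card (grid_level k m (m * (k - 1) div 2))"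
    using A by (intro card_lower_antichain_le_middle_level) (auto simp: L_def grid_antichain_def)
  moreover have "card U \<le> card (grid_level k m (m * (k - 1) div 2))"
  proof -
    have UG: "U \<subseteq> grid k m" using AG by (auto simp: U_def)
    have "grid_antichain k m (grid_flip k m ` U)"
      unfolding grid_antichain_def
    proof (intro conjI ballI impI)
      show "grid_flip k m ` U \<subseteq> grid k m" using UG grid_flip_in_grid by blast
      fix u v assume "u \<in> grid_flip k m ` U" "v \<in> grid_flip k m ` U" "cw_le m u v"
      then obtain x y where "x \<in> U" "y \<in> U" "u = grid_flip k m x" "v = grid_flip k m y" "cw_le m y x"
        using UG cw_le_flip_iff by blast
      then show "u = v" using A by (auto simp: grid_antichain_def U_def)
    qed
    moreover have "\<forall>x\<in>grid_flip k m ` U. 2 * grid_rank m x \<le> m * (k - 1)"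
      using grid_rank_flip UG by (fastforce simp: U_def L_def)
    ultimately have "card (grid_flip k m ` U) \<le> card (grid_level k m (m * (k - 1) div 2))"
      by (rule card_lower_antichain_le_middle_level)
    moreover have "card (grid_flip k m ` U) = card U"
      using UG by (intro card_image inj_on_subset[OF inj_on_grid_flip])
    ultimately show ?thesis by simp
  qed
  ultimately show "card A \<le> 2 * card (grid_level k m (m * (k - 1) div 2))" by linarith
qed

section \<open>Sizes of levels\<close>

lemma grid_Suc: "grid k (Suc m) = (\<lambda>(j, g). g(m := j)) ` ({1..k} \<times> grid k m)"
  unfolding grid_def lessThan_Suc by (rule PiE_insert_eq)

lemma sum_grid_Suc: "(\<Sum>x\<in>grid k (Suc m). f x) = (\<Sum>j\<in>{1..k}. \<Sum>y\<in>grid k m. f (y(m := j)))"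
proof -
  have "inj_on (\<lambda>(j, g). g(m := j)) ({1..k} \<times> grid k m)"
    unfolding grid_def by (rule inj_combinator) simp
  then have "(\<Sum>x\<in>grid k (Suc m). f x) = (\<Sum>p\<in>{1..k} \<times> grid k m. f ((\<lambda>(j, g). g(m := j)) p))"
    unfolding grid_Suc by (rule sum.reindex[unfolded comp_def])
  also have "\<dots> = (\<Sum>j\<in>{1..k}. \<Sum>y\<in>grid k m. f (y(m := j)))"
    unfolding sum.cartesian_product by (intro sum.cong) auto
  finally show ?thesis .
qed

lemma grid_rank_upd: "grid_rank (Suc m) (y(m := j)) = grid_rank m y + (j - 1)"
proof -
  have "grid_rank m (y(m := j)) = grid_rank m y" unfolding grid_rank_def by (intro sum.cong) auto
  then show ?thesis by (simp add: grid_rank_Suc)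
qed

text \<open>The rank generating function \<open>1 + X + \<dots> + X\<^sup>k\<^sup>-\<^sup>1\<close> of a \<open>k\<close>-element chain.\<close>

definition chain_poly :: "nat \<Rightarrow> nat poly" where
  "chain_poly k = (\<Sum>j<k. monom 1 j)"

lemma coeff_chain_poly: "coeff (chain_poly k) s = (if s < k then 1 else 0)"
  unfolding chain_poly_def coeff_sum coeff_monom by (simp add: sum.delta')

lemma poly_chain_poly_1: "poly (chain_poly k) 1 = k"
  unfolding chain_poly_def poly_sum poly_monom by simp

lemma sum_monom_grid_rank: "(\<Sum>x\<in>grid k m. monom 1 (grid_rank m x)) = chain_poly k ^ m"
proof (induction m)
  case 0
  have "grid k 0 = {\<lambda>_. undefined}" by (simp add: grid_def)
  then show ?case by (simp add: grid_rank_def monom_0 one_pCons)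
next
  case (Suc m)
  have "(\<Sum>x\<in>grid k (Suc m). monom (1::nat) (grid_rank (Suc m) x))
      = (\<Sum>j\<in>{1..k}. \<Sum>y\<in>grid k m. monom 1 (grid_rank m y) * monom 1 (j - 1))"
    unfolding sum_grid_Suc grid_rank_upd by (simp add: mult_monom)
  also have "\<dots> = (\<Sum>y\<in>grid k m. monom 1 (grid_rank m y)) * (\<Sum>j\<in>{1..k}. monom 1 (j - 1))"
    unfolding sum_product by (rule sum.swap)
  also have "(\<Sum>j\<in>{1..k}. monom 1 (j - 1)) = chain_poly k"
    unfolding chain_poly_def by (rule sum.reindex_bij_witness[of _ Suc "\<lambda>j. j - 1"]) auto
  finally show ?case by (simp only: Suc.IH power_Suc2)
qed

lemma card_grid_level_eq_coeff: "card (grid_level k m t) = coeff (chain_poly k ^ m) t"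
proof -
  have "coeff (chain_poly k ^ m) t = (\<Sum>x\<in>grid k m. if grid_rank m x = t then 1 else 0)"
    unfolding sum_monom_grid_rank[symmetric] coeff_sum coeff_monom ..
  also have "\<dots> = card (grid_level k m t)"
    by (simp add: grid_level_def sum.If_cases finite_grid Int_def)
  finally show ?thesis ..
qed

lemma sum_coeff_le_poly_1:
  fixes Q :: "nat poly"
  shows "(\<Sum>u\<le>N. coeff Q u) \<le> poly Q 1"
proof -
  have "(\<Sum>u\<le>N. coeff Q u) \<le> (\<Sum>u\<le>N + degree Q. coeff Q u)" by (intro sum_mono2) auto
  also have "\<dots> = poly Q 1"
    by (simp add: poly_altdef sum.mono_neutral_right[of "{..N + degree Q}" "{..degree Q}"] coeff_eq_0)
  finally show ?thesis .
qed

lemma sum_coeff_chain_poly_power_le: "(\<Sum>u\<le>N. coeff (chain_poly k ^ p) u) \<le> k ^ p"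
  using sum_coeff_le_poly_1[where N = N and Q = "chain_poly k ^ p"] unfolding poly_power poly_chain_poly_1 .

lemma coeff_chain_poly_power_le: "coeff (chain_poly k ^ p) s \<le> k ^ p"
  by (rule order_trans[OF member_le_sum[of s "{..s}"] sum_coeff_chain_poly_power_le]) auto

lemma chain_poly_double: "chain_poly (2*d) = chain_poly d * (1 + monom 1 d)"
proof -
  have u: "{..<2*d} = {..<d} \<union> {d..<d+d}" by auto
  have "chain_poly (2*d) = (\<Sum>j\<in>{..<d} \<union> {d..<d+d}. monom 1 j)" unfolding chain_poly_def u ..
  also have "\<dots> = (\<Sum>j<d. monom 1 j) + (\<Sum>j\<in>{d..<d+d}. monom 1 j)"
    by (rule sum.union_disjoint) auto
  also have "(\<Sum>j\<in>{d..<d+d}. monom 1 j) = (\<Sum>j\<in>{0..<d}. monom (1::nat) (j + d))"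
    using sum.shift_bounds_nat_ivl[of "monom (1::nat)" 0 d d] by simp
  also have "\<dots> = (\<Sum>j<d. monom 1 j) * monom 1 d"
    by (simp add: sum_distrib_right mult_monom atLeast0LessThan)
  finally show ?thesis unfolding chain_poly_def by (simp add: algebra_simps)
qed

lemma coeff_one_plus_monom_power_le:
  assumes d: "d \<ge> 1"
  shows "coeff ((1 + monom (1::nat) d) ^ p) s \<le> (if d dvd s then p choose (p div 2) else 0)"
proof -
  have "(monom (1::nat) d + 1) ^ p = (\<Sum>q\<le>p. of_nat (p choose q) * monom 1 d ^ q * 1 ^ (p - q))"
    by (rule binomial_ring)
  then have e: "(1 + monom (1::nat) d) ^ p = (\<Sum>q\<le>p. monom (p choose q) (d * q))"
    by (simp add: monom_power add.commute of_nat_monom mult_monom)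
  have "coeff ((1 + monom (1::nat) d) ^ p) s = (\<Sum>q\<le>p. if q = s div d \<and> d dvd s then p choose q else 0)"
    unfolding e coeff_sum coeff_monom using d
    by (intro sum.cong refl) (auto simp: dvd_def)
  also have "\<dots> \<le> (if d dvd s then p choose (p div 2) else 0)"
    by (auto simp: sum.delta' binomial_maximum)
  finally show ?thesis .
qed

lemma card_residue_window_le_1:
  fixes t d u :: nat
  shows "card {i\<in>{..t}. d dvd t - i \<and> u \<le> i \<and> i - u < d} \<le> 1"
proof -
  define S where "S = {i\<in>{..t}. d dvd t - i \<and> u \<le> i \<and> i - u < d}"
  have "i = j" if "i \<in> S" "j \<in> S" "i \<le> j" for i j
  proof -
    have "d dvd (t - i) - (t - j)" by (rule dvd_diff_nat) (use that in \<open>auto simp: S_def\<close>)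
    moreover have "(t - i) - (t - j) = j - i" "j - i < d" using that by (auto simp: S_def)
    ultimately show "i = j" using \<open>i \<le> j\<close> by (metis dvd_imp_le le_antisym not_le zero_less_diff)
  qed
  then have "\<forall>i\<in>S. \<forall>j\<in>S. i = j" by (metis nat_le_linear)
  moreover have "finite S" by (simp add: S_def)
  ultimately show ?thesis using card_le_Suc0_iff_eq[of S] by (simp add: S_def)
qed

text \<open>Write \<open>chain_poly d ^ p = Q * chain_poly d\<close>.  The coefficient at \<open>i\<close> collects the
  coefficients of \<open>Q\<close> at the \<open>d\<close> exponents \<open>i - d + 1, \<dots>, i\<close>, and such a window of exponents meets a
  residue class modulo \<open>d\<close> at most once, so no coefficient of \<open>Q\<close> is counted twice.\<close>

lemma sum_coeff_residue_class_le:
  assumes p: "p \<ge> 1"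
  shows "(\<Sum>i\<le>t. if d dvd t - i then coeff (chain_poly d ^ p) i else 0) \<le> d ^ (p - 1)"
proof -
  define Q where "Q = chain_poly d ^ (p - 1)"
  define window where "window u = {i\<in>{..t}. d dvd t - i \<and> u \<le> i \<and> i - u < d}" for u
  have PQ: "chain_poly d ^ p = Q * chain_poly d"
    using p unfolding Q_def by (metis Suc_diff_1 less_le_trans power_Suc2 zero_less_one)
  have coeff_i: "coeff (chain_poly d ^ p) i = (\<Sum>u\<le>t. if u \<le> i \<and> i - u < d then coeff Q u else 0)"
    if "i \<le> t" for i
  proof -
    have "coeff (chain_poly d ^ p) i = (\<Sum>u\<le>i. if i - u < d then coeff Q u else 0)"
      unfolding PQ coeff_mult coeff_chain_poly by (intro sum.cong) auto
    also have "\<dots> = (\<Sum>u\<le>t. if u \<le> i \<and> i - u < d then coeff Q u else 0)"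
      using that by (intro sum.mono_neutral_cong_left) auto
    finally show ?thesis .
  qed
  have "(\<Sum>i\<le>t. if d dvd t - i then coeff (chain_poly d ^ p) i else 0)
      = (\<Sum>i\<le>t. \<Sum>u\<le>t. if d dvd t - i \<and> u \<le> i \<and> i - u < d then coeff Q u else 0)"
    by (intro sum.cong refl) (auto simp: coeff_i intro: sum.neutral)
  also have "\<dots> = (\<Sum>u\<le>t. card (window u) * coeff Q u)"
    by (subst sum.swap) (simp add: window_def sum.If_cases Int_def)
  also have "\<dots> \<le> (\<Sum>u\<le>t. coeff Q u)"
  proof (rule sum_mono)
    fix u
    show "card (window u) * coeff Q u \<le> coeff Q u"
      using card_residue_window_le_1[of t d u] mult_right_mono[of "card (window u)" 1 "coeff Q u"]
      by (simp add: window_def)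
  qed
  also have "\<dots> \<le> d ^ (p - 1)" unfolding Q_def by (rule sum_coeff_chain_poly_power_le)
  finally show ?thesis .
qed

text \<open>By \<open>chain_poly (2d) = chain_poly d * (1 + X\<^sup>d)\<close>, the coefficient is a convolution in which the
  factor \<open>(1 + X\<^sup>d)\<^sup>p\<close> only contributes at multiples of \<open>d\<close>, with at most the central binomial
  coefficient.\<close>

lemma coeff_chain_poly_even_power_le:
  assumes d: "d \<ge> 1" and p: "p \<ge> 1"
  shows "coeff (chain_poly (2*d) ^ p) t \<le> d ^ (p - 1) * (p choose (p div 2))"
proof -
  define B where "B = p choose (p div 2)"
  have "coeff (chain_poly (2*d) ^ p) t = (\<Sum>i\<le>t. coeff (chain_poly d ^ p) i * coeff ((1 + monom 1 d) ^ p) (t - i))"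
    unfolding chain_poly_double power_mult_distrib coeff_mult ..
  also have "\<dots> \<le> (\<Sum>i\<le>t. B * (if d dvd (t - i) then coeff (chain_poly d ^ p) i else 0))"
  proof (intro sum_mono)
    fix i
    have cb: "coeff ((1 + monom 1 d) ^ p) (t - i) \<le> (if d dvd (t - i) then B else 0)"
      using coeff_one_plus_monom_power_le[OF d, of p "t - i"] unfolding B_def .
    show "coeff (chain_poly d ^ p) i * coeff ((1 + monom 1 d) ^ p) (t - i) \<le> B * (if d dvd (t - i) then coeff (chain_poly d ^ p) i else 0)"
    proof (cases "d dvd (t - i)")
      case True
      then show ?thesis using cb mult_left_mono[of "coeff ((1 + monom 1 d) ^ p) (t - i)" B "coeff (chain_poly d ^ p) i"]
        by (simp add: mult.commute)
    next
      case False
      then show ?thesis using cb by simp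
    qed
  qed
  also have "\<dots> = B * (\<Sum>i\<le>t. if d dvd (t - i) then coeff (chain_poly d ^ p) i else 0)"
    by (simp add: sum_distrib_left)
  also have "\<dots> \<le> B * d ^ (p - 1)" using sum_coeff_residue_class_le[OF p] by simp
  finally show ?thesis by (simp add: B_def mult.commute)
qed

lemma binomial_odd_middle: "(2*q+1 choose q) * Suc q = (2*q+1) * (2*q choose q)"
proof -
  have S2: "Suc (2*q) * (2*q choose q) = (Suc (2*q) choose Suc q) * Suc q"
    by (rule Suc_times_binomial_eq)
  have sym: "(Suc (2*q) choose Suc q) = (2*q+1 choose q)"
    using binomial_symmetric[of "Suc q" "Suc (2*q)"] by simp
  show ?thesis using S2 sym by simp
qed

lemma binomial_even_middle_Suc: "(2*Suc q choose Suc q) * Suc q = 2 * (2*q+1) * (2*q choose q)"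
proof -
  have S1: "Suc (2*q+1) * (2*q+1 choose q) = (Suc (2*q+1) choose Suc q) * Suc q"
    by (rule Suc_times_binomial_eq)
  have "(2*Suc q choose Suc q) * Suc q = Suc (2*q+1) * (2*q+1 choose q)" using S1 by simp
  also have "\<dots> = 2 * ((2*q+1 choose q) * Suc q)" by simp
  also have "\<dots> = 2 * ((2*q+1) * (2*q choose q))" using binomial_odd_middle[of q] by simp
  finally show ?thesis by simp
qed

lemma central_binomial_sq_le: "real (2*q choose q) ^ 2 * (3 * real q + 1) \<le> 16 ^ q"
proof (induction q)
  case 0 then show ?case by simp
next
  case (Suc q)
  define c where "c = real (2*q choose q)"
  define c' where "c' = real (2*Suc q choose Suc q)"
  have r: "c' * (real q + 1) = 2 * (2 * real q + 1) * c"
    using arg_cong[OF binomial_even_middle_Suc[of q], of real] unfolding c_def c'_def by (simp add: algebra_simps)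
  have c0: "c \<ge> 0" by (simp add: c_def)
  have poly: "(2 * real q + 1)^2 * (3 * real q + 4) \<le> 4 * (real q + 1)^2 * (3 * real q + 1)"
    by (simp add: power2_eq_square algebra_simps)
  have "c'^2 * (3 * real (Suc q) + 1) * (real q + 1)^2 = (c' * (real q + 1))^2 * (3 * real q + 4)"
    by (simp add: power2_eq_square algebra_simps)
  also have "\<dots> = 4 * c^2 * ((2 * real q + 1)^2 * (3 * real q + 4))" unfolding r by (simp add: power2_eq_square algebra_simps)
  also have "\<dots> \<le> 4 * c^2 * (4 * (real q + 1)^2 * (3 * real q + 1))"
    by (rule mult_left_mono[OF poly]) simp
  also have "\<dots> = 16 * (c^2 * (3 * real q + 1)) * (real q + 1)^2" by (simp add: algebra_simps)
  also have "\<dots> \<le> 16 * 16^q * (real q + 1)^2"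
    using Suc.IH unfolding c_def by (intro mult_right_mono) auto
  finally have "c'^2 * (3 * real (Suc q) + 1) * (real q + 1)^2 \<le> 16 ^ Suc q * (real q + 1)^2" by simp
  then show ?case unfolding c'_def by (smt (verit) mult_right_le_imp_le zero_less_power2 of_nat_0_le_iff)
qed

lemma middle_binomial_sq_le: "real (p choose (p div 2)) ^ 2 * (real p + 1) \<le> 2 * 4 ^ p"
proof (cases "even p")
  case True
  then obtain q where q: "p = 2*q" by auto
  have le: "real (2*q) + 1 \<le> 2 * (3 * real q + 1)" by simp
  have "real (2*q choose q) ^ 2 * (real (2*q) + 1) \<le> real (2*q choose q) ^ 2 * (2 * (3 * real q + 1))"
    by (rule mult_left_mono[OF le]) simp
  also have "\<dots> = 2 * (real (2*q choose q) ^ 2 * (3 * real q + 1))" by simp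
  also have "\<dots> \<le> 2 * 16 ^ q" using central_binomial_sq_le[of q] by simp
  also have "\<dots> = 2 * 4 ^ (2*q)" by (simp add: power_mult)
  finally show ?thesis using q by simp
next
  case False
  then obtain q where q: "p = 2*q+1" using oddE by blast
  have pd: "p div 2 = q" using q by simp
  define c where "c = real (2*q choose q)"
  define b where "b = real (2*q+1 choose q)"
  have e: "b * (real q + 1) = (2 * real q + 1) * c" using arg_cong[OF binomial_odd_middle[of q], of real] unfolding b_def c_def by (simp add: algebra_simps)
  have c0: "c \<ge> 0" by (simp add: c_def)
  have "b * (real q + 1) \<le> (2 * c) * (real q + 1)" using e c0 by (simp add: algebra_simps)
  then have b2: "b \<le> 2 * c" by (smt (verit) mult_right_le_imp_le of_nat_0_le_iff)
  have b0: "b \<ge> 0" by (simp add: b_def)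
  have "b^2 * (real p + 1) \<le> (2*c)^2 * (real p + 1)"
    using b2 b0 by (intro mult_right_mono power_mono) auto
  also have "\<dots> = 8 * (c^2 * (real q + 1))" using q by (simp add: power2_eq_square algebra_simps)
  also have "\<dots> \<le> 8 * (c^2 * (3 * real q + 1))" by (intro mult_left_mono) auto
  also have "\<dots> \<le> 8 * 16 ^ q" using central_binomial_sq_le[of q] unfolding c_def by simp
  also have "\<dots> = 2 * 4 ^ p" using q by (simp add: power_mult power_add)
  finally show ?thesis unfolding b_def pd using q by simp
qed

lemma middle_binomial_sqrt_le: "real (p choose (p div 2)) * sqrt (real p + 1) \<le> sqrt 2 * 2 ^ p"
proof -
  have "real (p choose (p div 2)) * sqrt (real p + 1) = sqrt (real (p choose (p div 2)) ^ 2 * (real p + 1))"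
    by (simp add: real_sqrt_mult)
  also have "\<dots> \<le> sqrt (2 * 4 ^ p)" using middle_binomial_sq_le[of p] by (rule real_sqrt_le_mono)
  also have "(4::real) ^ p = (2 ^ p)\<^sup>2" by (induction p) (simp_all add: power2_eq_square algebra_simps)
  also have "sqrt (2 * (2 ^ p)\<^sup>2) = sqrt 2 * 2 ^ p" unfolding real_sqrt_mult real_sqrt_abs by simp
  finally show ?thesis .
qed

lemma coeff_chain_poly_even_sqrt_le:
  assumes d: "d \<ge> 1" and m: "m \<ge> 1"
  shows "real (coeff (chain_poly (2*d) ^ m) t) * sqrt (real m + 1) \<le> 2 * sqrt 2 * (2 * real d) ^ (m - 1)"
proof -
  obtain n where n: "m = Suc n" using m by (cases m) auto
  have "real (coeff (chain_poly (2*d) ^ m) t) \<le> real (d ^ n * (m choose (m div 2)))"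
    using coeff_chain_poly_even_power_le[OF d m, of t] unfolding n by (simp only: of_nat_le_iff diff_Suc_1)
  then have "real (coeff (chain_poly (2*d) ^ m) t) * sqrt (real m + 1)
      \<le> real d ^ n * (real (m choose (m div 2)) * sqrt (real m + 1))"
    by (simp add: mult_right_mono mult.assoc)
  also have "\<dots> \<le> real d ^ n * (sqrt 2 * 2 ^ m)"
    by (intro mult_left_mono middle_binomial_sqrt_le) simp
  also have "\<dots> = 2 * sqrt 2 * (2 * real d) ^ (m - 1)"
    unfolding n by (simp add: power_mult_distrib)
  finally show ?thesis .
qed

text \<open>A bound uniform in \<open>p \<le> m\<close>: for \<open>p \<ge> m / 2\<close> the previous lemma applies, and for smaller \<open>p\<close>
  the trivial bound \<open>(2d)\<^sup>p\<close> is already small.\<close>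

lemma coeff_chain_poly_even_power_le_uniform:
  assumes d: "d \<ge> 1" and m: "m \<ge> 1" and p: "p \<le> m"
  shows "real (coeff (chain_poly (2*d) ^ p) s)
    \<le> 2 / real d * (2 * real d) ^ p / sqrt (real m + 1) + sqrt ((2 * real d) ^ (m - 1))"
proof (cases "m \<le> 2 * p")
  case True
  then have p1: "p \<ge> 1" using m by simp
  have "sqrt (real m + 1) \<le> sqrt 2 * sqrt (real p + 1)"
    using True by (simp flip: real_sqrt_mult)
  then have "real (coeff (chain_poly (2*d) ^ p) s) * sqrt (real m + 1)
      \<le> real (coeff (chain_poly (2*d) ^ p) s) * (sqrt 2 * sqrt (real p + 1))"
    by (rule mult_left_mono) simp
  also have "\<dots> = real (coeff (chain_poly (2*d) ^ p) s) * sqrt (real p + 1) * sqrt 2"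
    by (simp add: mult_ac)
  also have "\<dots> \<le> 2 * sqrt 2 * (2 * real d) ^ (p - 1) * sqrt 2"
    using coeff_chain_poly_even_sqrt_le[OF d p1] by (intro mult_right_mono) auto
  also have "\<dots> = 2 / real d * (2 * real d) ^ p"
    using d p1 by (simp add: power_eq_if[of _ p] field_simps)
  finally have "real (coeff (chain_poly (2*d) ^ p) s) \<le> 2 / real d * (2 * real d) ^ p / sqrt (real m + 1)"
    by (subst pos_le_divide_eq) auto
  moreover have "0 \<le> sqrt ((2 * real d) ^ (m - 1))" by simp
  ultimately show ?thesis by linarith
next
  case False
  have "real (coeff (chain_poly (2*d) ^ p) s) \<le> real ((2 * d) ^ p)"
    using coeff_chain_poly_power_le[of "2*d" p s] by (simp only: of_nat_le_iff)
  also have "\<dots> = (2 * real d) ^ p" by simp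
  also have "\<dots> = sqrt ((2 * real d) ^ (2 * p))"
    unfolding mult.commute[of 2 p] power_mult by simp
  also have "\<dots> \<le> sqrt ((2 * real d) ^ (m - 1))"
    using d False by (intro real_sqrt_le_mono power_increasing) auto
  moreover have "0 \<le> 2 / real d * (2 * real d) ^ p / sqrt (real m + 1)" by simp
  ultimately show ?thesis by linarith
qed

lemma chain_poly_odd: "chain_poly (2*d+1) = monom 1 (2*d) + chain_poly (2*d)"
  unfolding chain_poly_def by (simp add: add.commute)

lemma coeff_chain_poly_odd_power_le:
  assumes M: "\<And>p s. p \<le> m \<Longrightarrow> real (coeff (chain_poly (2*d) ^ p) s) \<le> M p"
  shows "real (coeff (chain_poly (2*d+1) ^ m) t) \<le> (\<Sum>q\<le>m. real (m choose q) * M (m - q))"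
proof -
  have "(monom 1 (2*d) + chain_poly (2*d)) ^ m
      = (\<Sum>q\<le>m. of_nat (m choose q) * monom 1 (2*d) ^ q * chain_poly (2*d) ^ (m - q))"
    by (rule binomial_ring)
  also have "\<dots> = (\<Sum>q\<le>m. monom (m choose q) (2*d*q) * chain_poly (2*d) ^ (m - q))"
    by (intro sum.cong refl) (simp add: monom_power of_nat_monom mult_monom)
  finally have "chain_poly (2*d+1) ^ m = (\<Sum>q\<le>m. monom (m choose q) (2*d*q) * chain_poly (2*d) ^ (m - q))"
    unfolding chain_poly_odd .
  then have "real (coeff (chain_poly (2*d+1) ^ m) t)
      = (\<Sum>q\<le>m. real (coeff (monom (m choose q) (2*d*q) * chain_poly (2*d) ^ (m - q)) t))"
    by (simp add: coeff_sum)
  also have "\<dots> \<le> (\<Sum>q\<le>m. real (m choose q) * M (m - q))"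
  proof (rule sum_mono)
    fix q assume "q \<in> {..m}"
    then have "real (coeff (chain_poly (2*d) ^ (m - q)) s) \<le> M (m - q)" for s
      using M by simp
    moreover have "0 \<le> M (m - q)" using M[of "m - q" 0] by simp
    ultimately show "real (coeff (monom (m choose q) (2*d*q) * chain_poly (2*d) ^ (m - q)) t)
      \<le> real (m choose q) * M (m - q)"
      unfolding coeff_monom_mult by (simp add: mult_left_mono)
  qed
  finally show ?thesis .
qed

lemma eight_ninths_power_le: "(8 / 9) ^ n * (real n + 8) \<le> 8"
proof (induction n)
  case (Suc n)
  have "(8 / 9) ^ Suc n * (real (Suc n) + 8) = (8 / 9) ^ n * (8 / 9 * (real n + 9))"
    by (simp add: algebra_simps)
  also have "\<dots> \<le> (8 / 9) ^ n * (real n + 8)" by (intro mult_left_mono) auto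
  finally show ?case using Suc.IH by linarith
qed simp

lemma odd_tail_le:
  assumes d: "d \<ge> 1"
  shows "2 ^ (n + 1) * sqrt ((2 * real d) ^ n) * sqrt (real n + 2) \<le> 6 * (2 * real d + 1) ^ n"
proof (rule power2_le_imp_le)
  have "0 \<le> (4 * real d - 1) * (real d - 1)" using d by (intro mult_nonneg_nonneg) auto
  then have "8 * real d \<le> 8 / 9 * (2 * real d + 1)\<^sup>2" by (simp add: power2_eq_square algebra_simps)
  then have "(8 * real d) ^ n \<le> (8 / 9 * (2 * real d + 1)\<^sup>2) ^ n" by (rule power_mono) simp
  also have "\<dots> = (8 / 9) ^ n * ((2 * real d + 1)\<^sup>2) ^ n" by (rule power_mult_distrib)
  also have "((2 * real d + 1)\<^sup>2) ^ n = ((2 * real d + 1) ^ n)\<^sup>2" by (metis power_mult mult.commute)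
  finally have base: "(8 * real d) ^ n \<le> (8 / 9) ^ n * ((2 * real d + 1) ^ n)\<^sup>2" .
  have two_pow: "((2::real) ^ (n + 1))\<^sup>2 * (2 * real d) ^ n = 4 * (8 * real d) ^ n"
    by (induction n) (simp_all add: power2_eq_square algebra_simps)
  have "(2 ^ (n + 1) * sqrt ((2 * real d) ^ n) * sqrt (real n + 2))\<^sup>2
      = (2 ^ (n + 1))\<^sup>2 * (2 * real d) ^ n * (real n + 2)"
    unfolding power_mult_distrib by simp
  also have "\<dots> = 4 * (8 * real d) ^ n * (real n + 2)" by (simp only: two_pow)
  also have "\<dots> \<le> 4 * ((8 / 9) ^ n * ((2 * real d + 1) ^ n)\<^sup>2) * (real n + 8)"
    by (rule mult_mono) (use base in auto)
  also have "\<dots> = 4 * ((8 / 9) ^ n * (real n + 8)) * ((2 * real d + 1) ^ n)\<^sup>2"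
    by (simp only: mult_ac)
  also have "\<dots> \<le> 4 * 8 * ((2 * real d + 1) ^ n)\<^sup>2"
    using eight_ninths_power_le[of n] by (intro mult_right_mono) (auto simp: mult.commute)
  also have "\<dots> \<le> (6 * (2 * real d + 1) ^ n)\<^sup>2" by (simp add: power_mult_distrib)
  finally show "(2 ^ (n + 1) * sqrt ((2 * real d) ^ n) * sqrt (real n + 2))\<^sup>2 \<le> (6 * (2 * real d + 1) ^ n)\<^sup>2" .
qed simp

text \<open>Expanding \<open>chain_poly (2d + 1) = X\<^sup>2\<^sup>d + chain_poly (2d)\<close> binomially, the terms with at least
  \<open>m / 2\<close> factors \<open>chain_poly (2d)\<close> are controlled by the even case, and the others are
  exponentially few.\<close>

lemma coeff_chain_poly_odd_sqrt_le:
  assumes d: "d \<ge> 1" and m: "m \<ge> 1"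
  shows "real (coeff (chain_poly (2*d+1) ^ m) t) * sqrt (real m + 1) \<le> 12 * (2 * real d + 1) ^ (m - 1)"
proof -
  obtain n where n: "m = Suc n" using m by (cases m) auto
  define S where "S = sqrt (real m + 1)"
  define G where "G = sqrt ((2 * real d) ^ (m - 1))"
  have S: "S > 0" by (simp add: S_def)
  have "real (coeff (chain_poly (2*d+1) ^ m) t)
      \<le> (\<Sum>q\<le>m. real (m choose q) * (2 / real d * (2 * real d) ^ (m - q) / S + G))"
    unfolding S_def G_def by (rule coeff_chain_poly_odd_power_le[OF coeff_chain_poly_even_power_le_uniform[OF d m]])
  also have "\<dots> = 2 / real d / S * (\<Sum>q\<le>m. real (m choose q) * 1 ^ q * (2 * real d) ^ (m - q))
      + G * (\<Sum>q\<le>m. real (m choose q))"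
    by (simp add: sum.distrib sum_distrib_left algebra_simps)
  also have "\<dots> = 2 / real d / S * (2 * real d + 1) ^ m + G * 2 ^ m"
    using binomial_ring[of 1 "2 * real d" m] choose_row_sum[of m]
    by (simp add: add.commute flip: of_nat_sum)
  finally have "real (coeff (chain_poly (2*d+1) ^ m) t) * S
      \<le> (2 / real d / S * (2 * real d + 1) ^ m + G * 2 ^ m) * S"
    using S by (simp add: mult_right_mono)
  also have "\<dots> = 2 / real d * (2 * real d + 1) ^ m + 2 ^ m * G * S"
    using S by (simp add: field_simps)
  also have "2 / real d * (2 * real d + 1) ^ m \<le> 6 * (2 * real d + 1) ^ (m - 1)"
  proof -
    have "2 / real d * (2 * real d + 1) \<le> 6" using d by (simp add: field_simps)
    then have "2 / real d * (2 * real d + 1) * (2 * real d + 1) ^ n \<le> 6 * (2 * real d + 1) ^ n"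
      by (rule mult_right_mono) simp
    then show ?thesis unfolding n by (simp only: power_Suc mult.assoc diff_Suc_1)
  qed
  also have "2 ^ m * G * S \<le> 6 * (2 * real d + 1) ^ (m - 1)"
    using odd_tail_le[OF d, of n] unfolding G_def S_def n by (simp add: add.commute)
  finally show ?thesis unfolding S_def by simp
qed

theorem card_grid_level_sqrt_le:
  assumes k: "k \<ge> 2" and m: "m \<ge> 1"
  shows "real (card (grid_level k m t)) * sqrt (real m + 1) \<le> 12 * real k ^ (m - 1)"
proof (cases "even k")
  case True
  then obtain d where k_eq: "k = 2 * d" and d: "d \<ge> 1" using k by (auto elim!: evenE)
  have "sqrt 2 \<le> 2" using real_sqrt_le_mono[of 2 4] by simp
  then have "2 * sqrt 2 * (2 * real d) ^ (m - 1) \<le> 12 * (2 * real d) ^ (m - 1)"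
    by (intro mult_right_mono) auto
  then show ?thesis
    using coeff_chain_poly_even_sqrt_le[OF d m, of t] unfolding card_grid_level_eq_coeff k_eq
    by (simp only: of_nat_mult of_nat_numeral)
next
  case False
  then obtain d where k_eq: "k = 2 * d + 1" and d: "d \<ge> 1" using k by (auto elim!: oddE)
  show ?thesis
    using coeff_chain_poly_odd_sqrt_le[OF d m, of t] unfolding card_grid_level_eq_coeff k_eq
    by (simp add: add.commute)
qed

corollary grid_width_sqrt_le:
  assumes "k \<ge> 2" "m \<ge> 1"
  shows "real (grid_width k m) * sqrt (real m + 1) \<le> 24 * real k ^ (m - 1)"
proof -
  have "real (grid_width k m) \<le> 2 * real (card (grid_level k m (m * (k - 1) div 2)))"
    using grid_width_le_middle_level[of k m] by linarith
  then have "real (grid_width k m) * sqrt (real m + 1)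
      \<le> 2 * (real (card (grid_level k m (m * (k - 1) div 2))) * sqrt (real m + 1))"
    by (simp add: mult_right_mono mult.assoc)
  also have "\<dots> \<le> 24 * real k ^ (m - 1)"
    using card_grid_level_sqrt_le[OF assms, of "m * (k - 1) div 2"] by linarith
  finally show ?thesis .
qed

section \<open>A large level\<close>

lemma sum_Icc_real: "(\<Sum>j\<in>{1..k}. real j) = real k * (real k + 1) / 2"
  by (induction k) (auto simp: algebra_simps add_divide_distrib)

lemma sum_Icc_real_squares: "(\<Sum>j\<in>{1..k}. real j ^ 2) = real k * (real k + 1) * (2 * real k + 1) / 6"
  by (induction k) (auto simp: algebra_simps power2_eq_square add_divide_distrib)

lemma sum_Icc_centred: "(\<Sum>j\<in>{1..k}. 2 * real j - real k - 1) = 0"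
proof -
  have "(\<Sum>j\<in>{1..k}. 2 * real j - real k - 1) = 2 * (\<Sum>j\<in>{1..k}. real j) - real k * (real k + 1)"
    by (simp add: sum_subtractf sum_distrib_left algebra_simps)
  then show ?thesis unfolding sum_Icc_real by simp
qed

lemma sum_Icc_centred_squares: "(\<Sum>j\<in>{1..k}. (2 * real j - real k - 1)\<^sup>2) = real k * (real k ^ 2 - 1) / 3"
proof -
  have "(\<Sum>j\<in>{1..k}. (2 * real j - real k - 1)\<^sup>2) =
        (\<Sum>j\<in>{1..k}. 4 * real j ^ 2 - 4 * (real k + 1) * real j + (real k + 1)\<^sup>2)"
    by (intro sum.cong) (auto simp: power2_eq_square algebra_simps)
  also have "\<dots> = 4 * (\<Sum>j\<in>{1..k}. real j ^ 2) - 4 * (real k + 1) * (\<Sum>j\<in>{1..k}. real j) + real k * (real k + 1)\<^sup>2"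
    by (simp add: sum.distrib sum_subtractf sum_distrib_left)
  also have "\<dots> = real k * (real k ^ 2 - 1) / 3"
    unfolding sum_Icc_real sum_Icc_real_squares by (simp add: field_simps power2_eq_square)
  finally show ?thesis .
qed

definition rank_deviation :: "nat \<Rightarrow> nat \<Rightarrow> (nat \<Rightarrow> nat) \<Rightarrow> real" where
  "rank_deviation k m x = 2 * real (grid_rank m x) - real m * (real k - 1)"

text \<open>The coordinates are independent, so the variance of the rank is additive: each coordinate
  contributes \<open>(k\<^sup>2 - 1) / 12\<close>.\<close>

lemma sum_rank_deviation_squares:
  "(\<Sum>x\<in>grid k m. rank_deviation k m x ^ 2) = real k ^ m * real m * (real k ^ 2 - 1) / 3"
proof (induction m)
  case 0
  have "grid k 0 = {\<lambda>_. undefined}" by (simp add: grid_def)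
  then show ?case by (simp add: rank_deviation_def grid_rank_def)
next
  case (Suc m)
  define e where "e j = 2 * real j - real k - 1" for j
  define dev where "dev = rank_deviation k m"
  have dev_upd: "rank_deviation k (Suc m) (y(m := j)) = dev y + e j" if "j \<in> {1..k}" for y j
    using that unfolding rank_deviation_def grid_rank_upd dev_def e_def by (simp add: of_nat_diff algebra_simps)
  have "(\<Sum>x\<in>grid k (Suc m). rank_deviation k (Suc m) x ^ 2)
      = (\<Sum>j\<in>{1..k}. \<Sum>y\<in>grid k m. dev y ^ 2 + 2 * e j * dev y + e j ^ 2)"
    unfolding sum_grid_Suc by (intro sum.cong refl) (simp add: dev_upd power2_eq_square algebra_simps)
  also have "\<dots> = (\<Sum>j\<in>{1..k}. (\<Sum>y\<in>grid k m. dev y ^ 2) + (2 * (\<Sum>y\<in>grid k m. dev y)) * e j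
      + real (card (grid k m)) * e j ^ 2)"
    by (intro sum.cong refl) (simp add: sum.distrib sum_distrib_left sum_distrib_right mult_ac)
  also have "\<dots> = real k * (\<Sum>y\<in>grid k m. dev y ^ 2) + 2 * (\<Sum>y\<in>grid k m. dev y) * (\<Sum>j\<in>{1..k}. e j)
      + real (card (grid k m)) * (\<Sum>j\<in>{1..k}. e j ^ 2)"
    by (simp add: sum.distrib flip: sum_distrib_left)
  also have "\<dots> = real k ^ Suc m * real (Suc m) * (real k ^ 2 - 1) / 3"
    unfolding e_def dev_def Suc.IH sum_Icc_centred sum_Icc_centred_squares card_grid
    by (simp add: field_simps)
  finally show ?case .
qed

text \<open>Chebyshev's inequality: at most half of the grid has rank further than \<open>\<surd>2\<close> standard
  deviations from the mean.\<close>

lemma card_concentrated_ge: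
  assumes k: "k \<ge> 2" and m: "m \<ge> 1"
  defines "T \<equiv> 2 * real m * (real k ^ 2 - 1) / 3"
  shows "real k ^ m \<le> 2 * real (card {x\<in>grid k m. rank_deviation k m x ^ 2 \<le> T})"
proof -
  define Good where "Good = {x\<in>grid k m. rank_deviation k m x ^ 2 \<le> T}"
  define Bad where "Bad = {x\<in>grid k m. T < rank_deviation k m x ^ 2}"
  have "real k ^ 2 \<ge> 2 ^ 2" using k by (intro power_mono) auto
  then have T: "T > 0" using m by (simp add: T_def)
  have "real (card Bad) * T = (\<Sum>x\<in>Bad. T)" by simp
  also have "\<dots> \<le> (\<Sum>x\<in>Bad. rank_deviation k m x ^ 2)" by (intro sum_mono) (auto simp: Bad_def)
  also have "\<dots> \<le> (\<Sum>x\<in>grid k m. rank_deviation k m x ^ 2)"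
    by (intro sum_mono2 finite_grid) (auto simp: Bad_def)
  also have "\<dots> = real k ^ m * T / 2" by (simp add: sum_rank_deviation_squares T_def)
  finally have "real (card Bad) \<le> real k ^ m / 2" using T by (simp add: field_simps)
  moreover have "card (grid k m) = card Good + card Bad"
    by (subst card_Un_disjoint[symmetric]) (auto simp: Good_def Bad_def finite_grid intro: arg_cong[where f = card])
  then have "real k ^ m = real (card Good) + real (card Bad)"
    unfolding card_grid by (metis of_nat_add of_nat_power)
  ultimately show ?thesis unfolding Good_def by linarith
qed

lemma card_ranks_le:
  assumes "S \<subseteq> {x\<in>grid k m. rank_deviation k m x ^ 2 \<le> T}" and "0 \<le> T"
  shows "real (card (grid_rank m ` S)) \<le> sqrt T + 1"
proof (cases "S = {}")
  case False
  define R where "R = grid_rank m ` S"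
  have near: "\<bar>2 * real t - real m * (real k - 1)\<bar> \<le> sqrt T" if "t \<in> R" for t
    using that assms(1) real_sqrt_le_mono[of "(2 * real t - real m * (real k - 1))\<^sup>2" T]
    by (auto simp: R_def rank_deviation_def)
  have "finite S" by (rule finite_subset[OF assms(1)]) (simp add: finite_grid)
  then have "finite R" by (simp add: R_def)
  moreover have "R \<noteq> {}" using False by (simp add: R_def)
  ultimately have R: "R \<subseteq> {Min R..Max R}" "Min R \<in> R" "Max R \<in> R" "Min R \<le> Max R" by auto
  then have "card R \<le> Max R + 1 - Min R" using card_mono[of "{Min R..Max R}" R] by simp
  then have "real (card R) \<le> real (Max R) + 1 - real (Min R)" using R(4) by (simp add: of_nat_diff)
  then show ?thesis using near[OF R(2)] near[OF R(3)] by (simp add: R_def)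
qed (simp add: \<open>0 \<le> T\<close>)

lemma exists_large_grid_level:
  assumes k: "k \<ge> 2" and m: "m \<ge> 1"
  shows "\<exists>t. real k ^ m \<le> 4 * real k * sqrt (real m) * real (card (grid_level k m t))"
proof -
  define T where "T = 2 * real m * (real k ^ 2 - 1) / 3"
  define Good where "Good = {x\<in>grid k m. rank_deviation k m x ^ 2 \<le> T}"
  define R where "R = grid_rank m ` Good"
  have concentrated: "real k ^ m \<le> 2 * real (card Good)"
    using card_concentrated_ge[OF k m] unfolding Good_def T_def .
  have "finite R" by (simp add: R_def Good_def finite_grid)
  moreover have "0 < real k ^ m" using k by simp
  then have "0 < real (card Good)" using concentrated by linarith
  then have "R \<noteq> {}" by (auto simp: R_def)
  ultimately have "Max ((\<lambda>r. card (grid_level k m r)) ` R) \<in> (\<lambda>r. card (grid_level k m r)) ` R"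
    by (intro Max_in) auto
  then obtain t where "t \<in> R" and t: "Max ((\<lambda>r. card (grid_level k m r)) ` R) = card (grid_level k m t)"
    by blast
  have t_max: "card (grid_level k m r) \<le> card (grid_level k m t)" if "r \<in> R" for r
    using \<open>finite R\<close> that by (simp flip: t)
  have "Good \<subseteq> (\<Union>r\<in>R. grid_level k m r)" by (auto simp: R_def Good_def grid_level_def)
  then have "card Good \<le> card (\<Union>r\<in>R. grid_level k m r)"
    by (intro card_mono) (auto simp: \<open>finite R\<close> finite_grid_level)
  also have "\<dots> \<le> (\<Sum>r\<in>R. card (grid_level k m r))" by (rule card_UN_le[OF \<open>finite R\<close>])
  also have "\<dots> \<le> card R * card (grid_level k m t)" using sum_mono[of R _ "\<lambda>_. card (grid_level k m t)"] t_max by simp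
  finally have "real (card Good) \<le> real (card R) * real (card (grid_level k m t))" by (simp flip: of_nat_mult)
  also have "\<dots> \<le> (sqrt T + 1) * real (card (grid_level k m t))"
    using card_ranks_le[of Good k m T] k by (intro mult_right_mono) (auto simp: R_def Good_def T_def)
  also have "\<dots> \<le> 2 * real k * sqrt (real m) * real (card (grid_level k m t))"
  proof (rule mult_right_mono)
    have "T \<le> (real k * sqrt (real m))\<^sup>2" using m by (simp add: T_def power_mult_distrib field_simps)
    then have "sqrt T \<le> real k * sqrt (real m)" using real_sqrt_le_mono by fastforce
    moreover have "1 * 1 \<le> real k * sqrt (real m)" using k m by (intro mult_mono) auto
    ultimately show "sqrt T + 1 \<le> 2 * real k * sqrt (real m)" by simp
  qed simp
  finally have "real k ^ m \<le> 4 * real k * sqrt (real m) * real (card (grid_level k m t))"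
    using concentrated by linarith
  then show ?thesis ..
qed

corollary grid_width_ge:
  assumes k: "k \<ge> 2" and m: "m \<ge> 1"
  shows "real k ^ (m - 1) \<le> 4 * sqrt (real m) * real (grid_width k m)"
proof -
  obtain t where t: "real k ^ m \<le> 4 * real k * sqrt (real m) * real (card (grid_level k m t))"
    using exists_large_grid_level[OF k m] ..
  have "real (card (grid_level k m t)) \<le> real (grid_width k m)"
    using card_antichain_le_width[OF grid_level_antichain] by simp
  then have "4 * real k * sqrt (real m) * real (card (grid_level k m t))
      \<le> 4 * real k * sqrt (real m) * real (grid_width k m)"
    by (rule mult_left_mono) simp
  moreover have "real k ^ m = real k * real k ^ (m - 1)" using m by (simp flip: power_Suc)
  ultimately have "real k * real k ^ (m - 1) \<le> real k * (4 * sqrt (real m) * real (grid_width k m))"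
    using t by (simp add: mult_ac)
  then show ?thesis using k by simp
qed

section \<open>Join-free families\<close>

definition join_free :: "nat \<Rightarrow> (nat \<Rightarrow> nat) set \<Rightarrow> bool" where
  "join_free n F \<longleftrightarrow> \<not> (\<exists>u\<in>F. \<exists>v\<in>F. \<exists>w\<in>F. u \<noteq> v \<and> u \<noteq> w \<and> v \<noteq> w \<and> u = join n v w)"

definition fibre_minimal :: "nat \<Rightarrow> ((nat \<Rightarrow> nat) \<Rightarrow> 'a) \<Rightarrow> (nat \<Rightarrow> nat) set \<Rightarrow> (nat \<Rightarrow> nat) set" where
  "fibre_minimal n q F = {u\<in>F. \<forall>v\<in>F. q v = q u \<longrightarrow> cw_le n v u \<longrightarrow> v = u}"

text \<open>If \<open>p\<close> reflects the order inside each fibre of \<open>q\<close>, it embeds the minimal elements of a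
  fibre as an antichain of \<open>[k]\<^sup>a\<close>.\<close>

lemma card_fibre_minimal_fibre_le:
  assumes F: "F \<subseteq> grid k n"
    and p: "\<And>u. u \<in> F \<Longrightarrow> p u \<in> grid k a"
    and reflect: "\<And>u v. u \<in> F \<Longrightarrow> v \<in> F \<Longrightarrow> q u = q v \<Longrightarrow> cw_le a (p u) (p v) \<Longrightarrow> cw_le n u v"
  shows "card {u\<in>fibre_minimal n q F. q u = y} \<le> grid_width k a"
proof -
  define G where "G = {u\<in>fibre_minimal n q F. q u = y}"
  have GF: "G \<subseteq> F" unfolding G_def fibre_minimal_def by blast
  have Gq: "q u = q v" if "u \<in> G" "v \<in> G" for u v using that by (simp add: G_def)
  have "inj_on p G"
  proof (rule inj_onI)
    fix u v assume uv: "u \<in> G" "v \<in> G" "p u = p v"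
    then have "u \<in> F" "v \<in> F" using GF by auto
    moreover have "cw_le n u v" "cw_le n v u"
      using reflect[OF \<open>u \<in> F\<close> \<open>v \<in> F\<close> Gq[OF uv(1,2)]] reflect[OF \<open>v \<in> F\<close> \<open>u \<in> F\<close> Gq[OF uv(2,1)]]
      by (simp_all add: uv(3) cw_le_refl)
    ultimately show "u = v" using cw_le_antisym F by blast
  qed
  moreover have "grid_antichain k a (p ` G)"
    unfolding grid_antichain_def
  proof (intro conjI ballI impI)
    show "p ` G \<subseteq> grid k a" using GF p by blast
    fix x x' assume "x \<in> p ` G" "x' \<in> p ` G" "cw_le a x x'"
    then obtain u v where uv: "u \<in> G" "v \<in> G" "x = p u" "x' = p v" and le: "cw_le a (p u) (p v)"
      by blast
    have "u \<in> F" "v \<in> F" using uv(1,2) GF by auto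
    with le have "cw_le n u v" using reflect Gq[OF uv(1,2)] by blast
    moreover have "v \<in> fibre_minimal n q F" using uv(2) by (simp add: G_def)
    ultimately have "u = v" using \<open>u \<in> F\<close> Gq[OF uv(1,2)] unfolding fibre_minimal_def by blast
    then show "x = x'" using uv by simp
  qed
  ultimately show ?thesis
    unfolding G_def[symmetric] by (metis card_antichain_le_width card_image)
qed

lemma card_fibre_minimal_le:
  assumes F: "F \<subseteq> grid k n" and Y: "finite Y" "q ` F \<subseteq> Y"
    and p: "\<And>u. u \<in> F \<Longrightarrow> p u \<in> grid k a"
    and reflect: "\<And>u v. u \<in> F \<Longrightarrow> v \<in> F \<Longrightarrow> q u = q v \<Longrightarrow> cw_le a (p u) (p v) \<Longrightarrow> cw_le n u v"
  shows "card (fibre_minimal n q F) \<le> card Y * grid_width k a"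
proof -
  have "fibre_minimal n q F = (\<Union>y\<in>Y. {u\<in>fibre_minimal n q F. q u = y})"
    using Y(2) by (auto simp: fibre_minimal_def)
  then have "card (fibre_minimal n q F) \<le> (\<Sum>y\<in>Y. card {u\<in>fibre_minimal n q F. q u = y})"
    by (metis card_UN_le[OF Y(1)])
  also have "\<dots> \<le> card Y * grid_width k a"
  proof -
    have "card {u\<in>fibre_minimal n q F. q u = y} \<le> grid_width k a" for y
      using F p reflect by (rule card_fibre_minimal_fibre_le)
    then show ?thesis using sum_mono[of Y _ "\<lambda>_. grid_width k a"] by simp
  qed
  finally show ?thesis .
qed

lemma join_free_fibre_minimal:
  assumes F: "F \<subseteq> grid k n" "join_free n F" and u: "u \<in> F"
  shows "u \<in> fibre_minimal n (\<lambda>v. restrict v ({..<n} - I)) F \<union> fibre_minimal n (\<lambda>v. restrict v I) F"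
proof (rule ccontr)
  have restrict_eq: "restrict v K = restrict u K \<longleftrightarrow> (\<forall>i\<in>K. v i = u i)" for v K
    by (metis restrict_apply' restrict_ext)
  assume "\<not> ?thesis"
  then obtain v w where v: "v \<in> F" "v \<noteq> u" "\<forall>i\<in>{..<n} - I. v i = u i" "cw_le n v u"
    and w: "w \<in> F" "w \<noteq> u" "\<forall>i\<in>I. w i = u i" "cw_le n w u"
    using u by (auto simp: fibre_minimal_def restrict_eq)
  have grid: "u \<in> grid k n" "v \<in> grid k n" "w \<in> grid k n" using F(1) u v w by auto
  have vw: "v \<noteq> w"
  proof
    assume "v = w"
    then have "v = u" using v(3) w(3) by (intro grid_eqI[OF grid(2,1)]) blast
    then show False using v(2) by simp
  qed
  have u_join: "u = join n v w"
  proof (rule grid_eqI[OF grid(1)])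
    show "join n v w \<in> grid k n"
      using grid(2,3) by (auto simp: join_def grid_def PiE_iff max_def)
    fix i assume "i < n"
    moreover have "v i \<le> u i" "w i \<le> u i" using v(4) w(4) \<open>i < n\<close> by (simp_all add: cw_le_def)
    ultimately show "u i = join n v w i"
      using v(3) w(3) by (cases "i \<in> I") (simp_all add: join_def max_def)
  qed
  have "\<exists>u\<in>F. \<exists>v\<in>F. \<exists>w\<in>F. u \<noteq> v \<and> u \<noteq> w \<and> v \<noteq> w \<and> u = join n v w"
    using u v(1,2) w(1,2) vw u_join by (intro bexI[of _ u] bexI[of _ v] bexI[of _ w]) auto
  then show False using F(2) by (simp add: join_free_def)
qed

lemma card_fibre_minimal_front_le:
  assumes F: "F \<subseteq> grid k (a + b)"
  shows "card (fibre_minimal (a + b) (\<lambda>v. restrict v {a..<a + b}) F) \<le> k ^ b * grid_width k a"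
proof -
  have "card (fibre_minimal (a + b) (\<lambda>v. restrict v {a..<a + b}) F)
      \<le> card (PiE {a..<a + b} (\<lambda>_. {1..k})) * grid_width k a"
  proof (rule card_fibre_minimal_le[OF F finite_PiE])
    show "(\<lambda>u. restrict u {a..<a + b}) ` F \<subseteq> PiE {a..<a + b} (\<lambda>_. {1..k})"
      using F by (intro image_subsetI) (auto simp: restrict_PiE_iff mem_grid_iff)
    show "restrict u {..<a} \<in> grid k a" if "u \<in> F" for u
      using F that by (auto simp: grid_def PiE_iff)
    show "cw_le (a + b) u v"
      if "restrict u {a..<a + b} = restrict v {a..<a + b}" "cw_le a (restrict u {..<a}) (restrict v {..<a})" for u v
      using that unfolding cw_le_def by (metis atLeastLessThan_iff lessThan_iff not_le order_refl restrict_apply')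
  qed simp_all
  then show ?thesis by (simp add: card_PiE)
qed

lemma card_fibre_minimal_back_le:
  assumes F: "F \<subseteq> grid k (a + b)"
  shows "card (fibre_minimal (a + b) (\<lambda>v. restrict v {..<a}) F) \<le> k ^ a * grid_width k b"
proof -
  have "card (fibre_minimal (a + b) (\<lambda>v. restrict v {..<a}) F)
      \<le> card (PiE {..<a} (\<lambda>_. {1..k})) * grid_width k b"
  proof (rule card_fibre_minimal_le[OF F finite_PiE, where p = "\<lambda>u. \<lambda>i\<in>{..<b}. u (a + i)"])
    show "(\<lambda>u. restrict u {..<a}) ` F \<subseteq> PiE {..<a} (\<lambda>_. {1..k})"
      using F by (intro image_subsetI) (auto simp: restrict_PiE_iff mem_grid_iff)
    show "(\<lambda>i\<in>{..<b}. u (a + i)) \<in> grid k b" if "u \<in> F" for u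
      using F that by (auto simp: grid_def PiE_iff)
    show "cw_le (a + b) u v"
      if uv: "restrict u {..<a} = restrict v {..<a}"
        "cw_le b (\<lambda>i\<in>{..<b}. u (a + i)) (\<lambda>i\<in>{..<b}. v (a + i))" for u v
    proof -
      have "u i \<le> v i" if "i < a + b" for i
        using uv that
        by (cases "i < a") (auto simp: cw_le_def dest: fun_cong[of _ _ i] spec[of _ "i - a"])
      then show ?thesis by (simp add: cw_le_def)
    qed
  qed simp_all
  then show ?thesis by (simp add: card_PiE)
qed

theorem card_join_free_le:
  assumes F: "F \<subseteq> grid k (a + b)" "join_free (a + b) F"
  shows "card F \<le> k ^ b * grid_width k a + k ^ a * grid_width k b"
proof -
  define front_min where "front_min = fibre_minimal (a + b) (\<lambda>v. restrict v {a..<a + b}) F"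
  define back_min where "back_min = fibre_minimal (a + b) (\<lambda>v. restrict v {..<a}) F"
  have "{..<a + b} - {..<a} = {a..<a + b}" by auto
  then have "F \<subseteq> front_min \<union> back_min"
    using join_free_fibre_minimal[OF F, of _ "{..<a}"] by (auto simp: front_min_def back_min_def)
  moreover have "finite (front_min \<union> back_min)"
    using F(1) by (intro finite_subset[OF _ finite_grid]) (auto simp: front_min_def back_min_def fibre_minimal_def)
  ultimately have "card F \<le> card front_min + card back_min" by (meson card_Un_le card_mono le_trans)
  also have "\<dots> \<le> k ^ b * grid_width k a + k ^ a * grid_width k b"
    using card_fibre_minimal_front_le[OF F(1)] card_fibre_minimal_back_le[OF F(1)]
    unfolding front_min_def back_min_def by (rule add_mono)
  finally show ?thesis .
qed

lemma power_mult_grid_width_le: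
  assumes k: "k \<ge> 2" and a: "a \<ge> 1" and n: "n = a + b" "n \<le> 2 * (a + 1)"
  shows "real (k ^ b * grid_width k a) \<le> 96 * sqrt 2 * real (grid_width k n)"
proof -
  have "real n \<le> real (2 * (a + 1))" using n(2) by (rule of_nat_mono)
  then have "sqrt (real n) \<le> sqrt (2 * (real a + 1))" by (intro real_sqrt_le_mono) simp
  then have sqrt_n: "sqrt (real n) \<le> sqrt 2 * sqrt (real a + 1)" by (simp only: real_sqrt_mult)
  have "real (k ^ b * grid_width k a) * sqrt (real n)
      \<le> real k ^ b * (real (grid_width k a) * (sqrt 2 * sqrt (real a + 1)))"
    using sqrt_n by (simp add: mult_left_mono mult.assoc)
  also have "\<dots> = sqrt 2 * real k ^ b * (real (grid_width k a) * sqrt (real a + 1))" by (simp add: mult_ac)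
  also have "\<dots> \<le> sqrt 2 * real k ^ b * (24 * real k ^ (a - 1))"
    using grid_width_sqrt_le[OF k a] by (intro mult_left_mono) auto
  also have "\<dots> = 24 * sqrt 2 * real k ^ (n - 1)"
    using n(1) a by (simp add: power_add[symmetric] mult_ac add.commute)
  also have "\<dots> \<le> 24 * sqrt 2 * (4 * sqrt (real n) * real (grid_width k n))"
    using grid_width_ge[OF k, of n] n a by (intro mult_left_mono) auto
  finally have "real (k ^ b * grid_width k a) * sqrt (real n) \<le> (96 * sqrt 2 * real (grid_width k n)) * sqrt (real n)"
    by (simp add: mult_ac)
  moreover have "sqrt (real n) > 0" using n a by simp
  ultimately show ?thesis by simp
qed

theorem theorem2p6:
  shows "\<exists>K::real. \<forall>k n :: nat. \<forall>F. k > 1 \<longrightarrow> n > 1 \<longrightarrow> F \<subseteq> grid k n \<longrightarrow>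
     \<not> (\<exists>u\<in>F. \<exists>v\<in>F. \<exists>w\<in>F. u \<noteq> v \<and> u \<noteq> w \<and> v \<noteq> w \<and> u = join n v w) \<longrightarrow>
     real (card F) \<le> K * real (grid_width k n)"
proof (intro exI[of _ "192 * sqrt 2"] allI impI)
  fix k n :: nat and F
  assume k: "k > 1" and n: "n > 1" and F: "F \<subseteq> grid k n"
    and "\<not> (\<exists>u\<in>F. \<exists>v\<in>F. \<exists>w\<in>F. u \<noteq> v \<and> u \<noteq> w \<and> v \<noteq> w \<and> u = join n v w)"
  then have "join_free n F" by (simp add: join_free_def)
  define a where "a = n div 2"
  define b where "b = n - a"
  have ab: "n = a + b" "n = b + a" "a \<ge> 1" "b \<ge> 1" "n \<le> 2 * (a + 1)" "n \<le> 2 * (b + 1)"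
    using n by (auto simp: a_def b_def)
  have "k \<ge> 2" using k by simp
  have "card F \<le> k ^ b * grid_width k a + k ^ a * grid_width k b"
    using card_join_free_le[of F k a b] F \<open>join_free n F\<close> ab(1) by simp
  then have "real (card F) \<le> real (k ^ b * grid_width k a) + real (k ^ a * grid_width k b)"
    by linarith
  also have "\<dots> \<le> 96 * sqrt 2 * real (grid_width k n) + 96 * sqrt 2 * real (grid_width k n)"
    using power_mult_grid_width_le[OF \<open>k \<ge> 2\<close> ab(3,1,5)] power_mult_grid_width_le[OF \<open>k \<ge> 2\<close> ab(4,2,6)]
    by (rule add_mono)
  finally show "real (card F) \<le> 192 * sqrt 2 * real (grid_width k n)" by linarith
qed

end
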